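(* Let $\varphi\in L_{loc}(\mathbb{R}^n_+)$ be nonnegative. Then for every $r\ge1$ and every $\alpha\in\mathbb{R}$, $$\int_{\mathbb{R}^n_+}(T\varphi(x))^r\pi(x)^\alpha\,dx\le 2^{\max(1,\alpha)n}\int_{\mathbb{R}^n_+}\varphi(x)^r\pi(x)^\alpha\,dx.$$
   Context: $\mathbb{R}^n_+=(0,\infty)^n$. For $x=(x_1,\dots,x_n)\in\mathbb{R}^n_+$, $\pi(x)=\prod_{k=1}^n x_k$ and $Q(x)=[x_1/2,x_1]\times\cdots\times[x_n/2,x_n]$. For nonnegative $\varphi\in L_{loc}(\mathbb{R}^n_+)$, $T\varphi(x)=\frac{1}{|Q(x)|}\int_{Q(x)}\varphi(u)\,du$. *)

theory Defs
  imports "HOL-Analysis.Analysis"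
begin

definition pos_orthant :: "(real^'n) set" where
  "pos_orthant = {x. \<forall>i. 0 < x $ i}"

definition piprod :: "real^'n \<Rightarrow> real" where
  "piprod x = (\<Prod>i\<in>UNIV. x $ i)"

definition Qbox :: "real^'n \<Rightarrow> (real^'n) set" where
  "Qbox x = cbox ((1/2) *\<^sub>R x) x"

definition Tavg :: "(real^'n \<Rightarrow> real) \<Rightarrow> real^'n \<Rightarrow> real" where
  "Tavg \<phi> x = (LINT u:Qbox x|lebesgue. \<phi> u) / measure lebesgue (Qbox x)"

definition loc_integrable_pos :: "(real^'n \<Rightarrow> real) \<Rightarrow> bool" where
  "loc_integrable_pos \<phi> \<longleftrightarrow>
     (\<forall>K. compact K \<and> K \<subseteq> pos_orthant \<longrightarrow> set_integrable lebesgue K \<phi>)"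

end

(*
  Jensen's inequality on each box gives (T\<phi>(x))^r |Q(x)| \<le> \<integral>_Q(x) \<phi>^r, and |Q(x)| = 2^-n \<pi>(x).
  Multiplying by \<pi>(x)^\<alpha>, integrating over x and exchanging the order of integration
  (u \<in> Q(x) iff x \<in> [u, 2u]) leaves the weight 2^n \<integral>_[u,2u] \<pi>(x)^(\<alpha>-1) dx, which is at most
  2^(max(1,\<alpha>) n) \<pi>(u)^\<alpha> because \<pi> varies by a factor of at most 2^n on [u, 2u] and
  the box [u, 2u] has volume \<pi>(u).
*)
theory Submission
  imports Defs
begin

lemma powr_ge_tangent:
  fixes m t r :: real
  assumes "0 < m" "0 \<le> t" "1 \<le> r"
  shows "m powr r + r * m powr (r - 1) * (t - m) \<le> t powr r"
proof (cases "t = 0")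
  case True
  have "m powr r = m powr (r - 1) * m"
    using assms by (simp add: powr_diff)
  then have "m powr r + r * m powr (r - 1) * (0 - m) = (1 - r) * m powr r"
    by (simp add: algebra_simps)
  also have "\<dots> \<le> 0"
    using assms by (simp add: mult_nonpos_nonneg)
  finally show ?thesis
    using True by simp
next
  case False
  have "((\<lambda>z. z powr r) has_field_derivative r * m powr (r - 1)) (at m within {0<..})"
    by (rule has_field_derivative_at_within, rule has_real_derivative_powr) (use assms in auto)
  from convex_on_imp_above_tangent[OF powr_convex[OF assms(3)] _ _ _ this]
  have "r * m powr (r - 1) * (t - m) \<le> t powr r - m powr r"
    using assms False by (simp add: interior_open)
  then show ?thesis by simp
qed

lemma set_average_powr_le_set_integral:
  fixes f :: "'a \<Rightarrow> real"
  assumes Q: "Q \<in> sets M" "0 < measure M Q"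
    and f: "set_integrable M Q f" "\<forall>u\<in>Q. 0 \<le> f u"
    and fr: "set_integrable M Q (\<lambda>u. f u powr r)"
    and r: "1 \<le> r"
  shows "(set_lebesgue_integral M Q f / measure M Q) powr r * measure M Q
       \<le> set_lebesgue_integral M Q (\<lambda>u. f u powr r)"
proof -
  \<comment> \<open>Integrate the tangent line of t powr r at the mean m, which lies below t powr r.\<close>
  define \<mu> where "\<mu> = measure M Q"
  define m where "m = set_lebesgue_integral M Q f / \<mu>"
  define A where "A = m powr r"
  define B where "B = r * m powr (r - 1)"
  have fin: "emeasure M Q < \<infinity>"
    using Q measure_zero_top[of M Q] by (auto simp: less_top[symmetric])
  have int_f: "integrable M (\<lambda>u. indicator Q u * f u)"
    using f by (simp add: set_integrable_def)
  have m_nonneg: "0 \<le> m"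
    using f unfolding m_def set_lebesgue_integral_def
    by (intro divide_nonneg_nonneg integral_nonneg_AE) (auto simp: indicator_def \<mu>_def)
  have tangent_eq: "(\<lambda>u. indicator Q u * (A + B * (f u - m)))
      = (\<lambda>u. (A - B * m) * indicator Q u + B * (indicator Q u * f u))"
    by (auto simp: fun_eq_iff algebra_simps)
  have "A * \<mu> = (\<integral>u. indicator Q u * (A + B * (f u - m)) \<partial>M)"
    using Q fin int_f unfolding tangent_eq
    by (simp add: m_def \<mu>_def set_lebesgue_integral_def algebra_simps)
  also have "\<dots> \<le> (\<integral>u. indicator Q u * f u powr r \<partial>M)"
  proof (rule integral_mono)
    show "integrable M (\<lambda>u. indicator Q u * (A + B * (f u - m)))"
      using Q fin int_f unfolding tangent_eq by simp
    show "integrable M (\<lambda>u. indicator Q u * f u powr r)"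
      using fr by (simp add: set_integrable_def)
  next
    fix u
    show "indicator Q u * (A + B * (f u - m)) \<le> indicator Q u * f u powr r"
    proof (cases "m = 0")
      case True
      then show ?thesis
        using f r by (auto simp: indicator_def A_def B_def)
    next
      case False
      then show ?thesis
        using powr_ge_tangent[of m "f u" r] m_nonneg f r
        by (auto simp: indicator_def A_def B_def)
    qed
  qed
  finally show ?thesis
    by (simp add: A_def m_def \<mu>_def set_lebesgue_integral_def)
qed

lemma set_average_powr_le:
  fixes f :: "'a \<Rightarrow> real"
  assumes Q: "Q \<in> sets M" "0 < measure M Q"
    and f: "set_integrable M Q f" "\<forall>u\<in>Q. 0 \<le> f u"
    and r: "1 \<le> r"
  shows "ennreal ((set_lebesgue_integral M Q f / measure M Q) powr r * measure M Q)
        \<le> (\<integral>\<^sup>+u\<in>Q. ennreal (f u powr r) \<partial>M)"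
proof -
  have fr_eq: "(\<lambda>u. ennreal (f u powr r) * indicator Q u) = (\<lambda>u. ennreal (indicator Q u * f u powr r))"
    by (auto simp: indicator_def fun_eq_iff)
  have fr_meas: "(\<lambda>u. indicator Q u * f u powr r) \<in> borel_measurable M"
  proof -
    have "integrable M (\<lambda>u. indicator Q u * f u)"
      using f(1) by (simp add: set_integrable_def)
    then have "(\<lambda>u. (indicator Q u * f u) powr r) \<in> borel_measurable M"
      by measurable
    then show ?thesis
      by (rule measurable_cong[THEN iffD1, rotated]) (auto simp: indicator_def)
  qed
  show ?thesis
  proof (cases "(\<integral>\<^sup>+u. ennreal (indicator Q u * f u powr r) \<partial>M) = \<infinity>")
    case True
    then show ?thesis by (simp add: fr_eq)
  next
    case False
    have "integrable M (\<lambda>u. indicator Q u * f u powr r)"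
      by (rule integrableI_nonneg[OF fr_meas]) (use False in \<open>auto simp: top.not_eq_extremum\<close>)
    with set_average_powr_le_set_integral[OF Q f _ r] show ?thesis
      by (simp add: fr_eq nn_integral_eq_integral set_integrable_def set_lebesgue_integral_def)
  qed
qed

lemma mem_Qbox: "u \<in> Qbox x \<longleftrightarrow> (\<forall>i. x $ i / 2 \<le> u $ i \<and> u $ i \<le> x $ i)"
  by (simp add: Qbox_def mem_box_cart)

lemma mem_Qbox_iff_mem_cbox: "u \<in> Qbox x \<longleftrightarrow> x \<in> cbox u (2 *\<^sub>R u)"
  by (auto simp: mem_Qbox mem_box_cart field_simps)

lemma piprod_pos: "x \<in> pos_orthant \<Longrightarrow> 0 < piprod x"
  by (simp add: piprod_def pos_orthant_def prod_pos)

lemma Qbox_subset_pos_orthant: "x \<in> pos_orthant \<Longrightarrow> Qbox x \<subseteq> pos_orthant"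
  unfolding pos_orthant_def subset_iff mem_Qbox mem_Collect_eq
  by (metis half_gt_zero order_less_le_trans)

lemma cbox_double_subset_pos_orthant: "u \<in> pos_orthant \<Longrightarrow> cbox u (2 *\<^sub>R u) \<subseteq> pos_orthant"
  unfolding pos_orthant_def subset_iff mem_box_cart mem_Collect_eq
  by (metis order_less_le_trans)

lemma pos_orthant_Qbox_iff:
  "x \<in> pos_orthant \<and> u \<in> Qbox x \<longleftrightarrow> u \<in> pos_orthant \<and> x \<in> cbox u (2 *\<^sub>R u)"
  using Qbox_subset_pos_orthant cbox_double_subset_pos_orthant mem_Qbox_iff_mem_cbox by blast

lemma measure_Qbox:
  fixes x :: "real^'n"
  assumes "x \<in> pos_orthant"
  shows "measure lebesgue (Qbox x) = piprod x / 2 ^ CARD('n)"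
proof -
  have "x \<in> Qbox x"
    using assms by (auto simp: mem_Qbox pos_orthant_def less_imp_le)
  then have "Qbox x \<noteq> {}"
    by blast
  then have "measure lebesgue (Qbox x) = (\<Prod>i\<in>UNIV. x $ i - ((1/2) *\<^sub>R x) $ i)"
    unfolding Qbox_def by (simp add: content_cbox_cart)
  also have "\<dots> = piprod x / 2 ^ CARD('n)"
    by (simp add: piprod_def prod_dividef)
  finally show ?thesis .
qed

lemma emeasure_cbox_double:
  fixes u :: "real^'n"
  assumes "u \<in> pos_orthant"
  shows "emeasure lborel (cbox u (2 *\<^sub>R u)) = ennreal (piprod u)"
proof -
  have "u \<in> cbox u (2 *\<^sub>R u)"
    using assms by (auto simp: mem_box_cart pos_orthant_def less_imp_le)
  then have "cbox u (2 *\<^sub>R u) \<noteq> {}"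
    by blast
  then have "measure lborel (cbox u (2 *\<^sub>R u)) = piprod u"
    by (simp add: content_cbox_cart piprod_def)
  then show ?thesis
    by (simp add: emeasure_eq_measure2 emeasure_lborel_cbox_finite)
qed

lemma piprod_powr_le_cbox_double:
  fixes u x :: "real^'n"
  assumes u: "u \<in> pos_orthant" and x: "x \<in> cbox u (2 *\<^sub>R u)"
  shows "piprod x powr \<beta> \<le> 2 powr (real CARD('n) * max 0 \<beta>) * piprod u powr \<beta>"
proof -
  have coord: "0 < u $ i \<and> u $ i \<le> x $ i \<and> x $ i \<le> 2 * u $ i" for i
    using u x by (auto simp: pos_orthant_def mem_box_cart)
  have pos: "0 < piprod u"
    using u by (rule piprod_pos)
  have lower: "piprod u \<le> piprod x"
    unfolding piprod_def by (rule prod_mono) (use coord in \<open>auto intro: less_imp_le\<close>)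
  have "piprod x \<le> (\<Prod>i\<in>UNIV. 2 * u $ i)"
    unfolding piprod_def by (rule prod_mono) (use coord in \<open>auto intro: less_imp_le order_trans\<close>)
  also have "\<dots> = 2 powr real CARD('n) * piprod u"
    by (simp add: piprod_def prod.distrib powr_realpow)
  finally have upper: "piprod x \<le> 2 powr real CARD('n) * piprod u" .
  show ?thesis
  proof (cases "0 \<le> \<beta>")
    case True
    have "piprod x powr \<beta> \<le> (2 powr real CARD('n) * piprod u) powr \<beta>"
      by (rule powr_mono2) (use True pos lower upper in auto)
    also have "\<dots> = 2 powr (real CARD('n) * \<beta>) * piprod u powr \<beta>"
      by (simp add: powr_mult powr_powr)
    finally show ?thesis
      using True by simp
  next
    case False
    have "piprod x powr \<beta> \<le> piprod u powr \<beta>"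
      by (rule powr_mono2') (use False pos lower in auto)
    then show ?thesis
      using False by simp
  qed
qed

lemma pos_orthant_sets [measurable]: "(pos_orthant :: (real^'n) set) \<in> sets lborel"
proof -
  have "Measurable.pred lborel (\<lambda>x::real^'n. \<forall>i. 0 < x $ i)"
    by measurable
  then show ?thesis
    by (simp add: pos_orthant_def pred_def space_lborel Collect_conv_if)
qed

lemma piprod_measurable [measurable]: "piprod \<in> borel_measurable lborel"
  unfolding piprod_def by measurable

lemma eventually_mem_cbox_exhaustion:
  fixes x :: "real^'n"
  assumes "x \<in> pos_orthant"
  shows "eventually (\<lambda>m. x \<in> cbox (\<chi> i. 1 / real (Suc m)) (\<chi> i. real (Suc m))) sequentially"
proof -
  have "eventually (\<lambda>m. 1 / real (Suc m) \<le> x $ i \<and> x $ i \<le> real (Suc m)) sequentially" for i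
  proof -
    have xi: "0 < x $ i"
      using assms by (simp add: pos_orthant_def)
    obtain N :: nat where N: "max (1 / x $ i) (x $ i) < N"
      using reals_Archimedean2 by blast
    show ?thesis
    proof (rule eventually_sequentiallyI[of N])
      fix m assume "N \<le> m"
      then have "1 / x $ i \<le> real (Suc m)" "x $ i \<le> real (Suc m)"
        using N by (simp_all add: max_less_iff_conj)
      then show "1 / real (Suc m) \<le> x $ i \<and> x $ i \<le> real (Suc m)"
        using xi by (simp add: divide_le_eq mult.commute)
    qed
  qed
  then show ?thesis
    by (auto simp: mem_box_cart intro: eventually_all_finite)
qed

lemma loc_integrable_pos_measurable:
  fixes \<phi> :: "real^'n \<Rightarrow> real"
  assumes "loc_integrable_pos \<phi>"
  shows "(\<lambda>x. \<phi> x * indicator pos_orthant x) \<in> borel_measurable lebesgue"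
proof -
  define K where "K m = cbox (\<chi> i. 1 / real (Suc m)) (\<chi> i. real (Suc m) :: real^'n)" for m
  have K_sub: "K m \<subseteq> pos_orthant" for m
    unfolding K_def pos_orthant_def subset_iff mem_box_cart mem_Collect_eq
    by (metis of_nat_0_less_iff order_less_le_trans vec_lambda_beta zero_less_Suc zero_less_divide_1_iff)
  have "set_integrable lebesgue (K m) \<phi>" for m
    using assms K_sub[of m] unfolding loc_integrable_pos_def by (auto simp: K_def)
  then have K_meas: "(\<lambda>x. indicator (K m) x * \<phi> x) \<in> borel_measurable lebesgue" for m
    unfolding set_integrable_def by (auto dest: borel_measurable_integrable)
  show ?thesis
  proof (rule borel_measurable_LIMSEQ_real[OF _ K_meas])
    fix x :: "real^'n"
    show "(\<lambda>m. indicator (K m) x * \<phi> x) \<longlonglongrightarrow> \<phi> x * indicator pos_orthant x"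
    proof (cases "x \<in> pos_orthant")
      case False
      then have "x \<notin> K m" for m
        using K_sub by blast
      then show ?thesis
        using False by simp
    next
      case True
      from eventually_mem_cbox_exhaustion[OF True]
      have "eventually (\<lambda>m. indicator (K m) x * \<phi> x = \<phi> x * indicator pos_orthant x) sequentially"
        by eventually_elim (use True in \<open>simp add: K_def\<close>)
      then show ?thesis
        by (rule tendsto_eventually)
    qed
  qed
qed

lemma Tavg_powr_le_Qbox_integral:
  fixes \<phi> :: "real^'n \<Rightarrow> real"
  assumes "loc_integrable_pos \<phi>" "\<forall>x\<in>pos_orthant. 0 \<le> \<phi> x" "1 \<le> r"
    and x: "x \<in> pos_orthant"
  shows "ennreal (Tavg \<phi> x powr r * piprod x powr \<alpha>)
       \<le> ennreal (2 ^ CARD('n) * piprod x powr (\<alpha> - 1))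
         * (\<integral>\<^sup>+u\<in>Qbox x. ennreal (\<phi> u powr r) \<partial>lebesgue)"
proof -
  have Q_sub: "Qbox x \<subseteq> pos_orthant"
    using x by (rule Qbox_subset_pos_orthant)
  have pos: "0 < piprod x"
    using x by (rule piprod_pos)
  have \<mu>: "measure lebesgue (Qbox x) = piprod x / 2 ^ CARD('n)"
    using x by (rule measure_Qbox)
  have "set_integrable lebesgue (Qbox x) \<phi>"
    using assms(1) Q_sub unfolding loc_integrable_pos_def by (simp add: Qbox_def)
  from set_average_powr_le[OF _ _ this _ assms(3)]
  have jensen: "ennreal (Tavg \<phi> x powr r * measure lebesgue (Qbox x))
      \<le> (\<integral>\<^sup>+u\<in>Qbox x. ennreal (\<phi> u powr r) \<partial>lebesgue)"
    using assms(2) Q_sub \<mu> pos by (auto simp: Tavg_def Qbox_def)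
  have "piprod x powr \<alpha> = piprod x powr (\<alpha> - 1) * piprod x"
    using pos by (simp add: powr_diff)
  then have eq: "Tavg \<phi> x powr r * piprod x powr \<alpha>
      = (2 ^ CARD('n) * piprod x powr (\<alpha> - 1))
        * (Tavg \<phi> x powr r * measure lebesgue (Qbox x))"
    by (simp add: \<mu>)
  have "ennreal (Tavg \<phi> x powr r * piprod x powr \<alpha>)
      = ennreal (2 ^ CARD('n) * piprod x powr (\<alpha> - 1))
        * ennreal (Tavg \<phi> x powr r * measure lebesgue (Qbox x))"
    unfolding eq by (rule ennreal_mult') simp
  also have "\<dots> \<le> ennreal (2 ^ CARD('n) * piprod x powr (\<alpha> - 1))
      * (\<integral>\<^sup>+u\<in>Qbox x. ennreal (\<phi> u powr r) \<partial>lebesgue)"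
    by (rule mult_left_mono[OF jensen]) simp
  finally show ?thesis .
qed

lemma nn_integral_cbox_double_piprod_powr_le:
  fixes u :: "real^'n"
  assumes u: "u \<in> pos_orthant"
  shows "(\<integral>\<^sup>+x\<in>cbox u (2 *\<^sub>R u). ennreal (2 ^ CARD('n) * piprod x powr (\<alpha> - 1)) \<partial>lebesgue)
       \<le> ennreal (2 powr (max 1 \<alpha> * real CARD('n)) * piprod u powr \<alpha>)"
proof -
  define c where
    "c = 2 ^ CARD('n) * (2 powr (real CARD('n) * max 0 (\<alpha> - 1)) * piprod u powr (\<alpha> - 1))"
  have "(\<integral>\<^sup>+x\<in>cbox u (2 *\<^sub>R u). ennreal (2 ^ CARD('n) * piprod x powr (\<alpha> - 1)) \<partial>lebesgue)
      \<le> (\<integral>\<^sup>+x. ennreal c * indicator (cbox u (2 *\<^sub>R u)) x \<partial>lebesgue)"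
    using piprod_powr_le_cbox_double[OF u]
    by (intro nn_integral_mono) (auto simp: c_def indicator_def intro!: ennreal_leI)
  also have "\<dots> = ennreal c * ennreal (piprod u)"
    using u by (simp add: nn_integral_cmult_indicator emeasure_cbox_double)
  also have "\<dots> = ennreal (c * piprod u)"
    by (simp add: ennreal_mult' c_def)
  also have "c * piprod u = 2 powr (max 1 \<alpha> * real CARD('n)) * piprod u powr \<alpha>"
  proof -
    have "piprod u powr (\<alpha> - 1) * piprod u = piprod u powr \<alpha>"
      using piprod_pos[OF u] by (simp add: powr_diff)
    moreover have "2 ^ CARD('n) * 2 powr (real CARD('n) * max 0 (\<alpha> - 1))
        = (2::real) powr (max 1 \<alpha> * real CARD('n))"
      by (simp add: powr_realpow[symmetric] powr_add[symmetric] max_def algebra_simps)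
    ultimately show ?thesis
      unfolding c_def by (metis mult.assoc)
  qed
  finally show ?thesis .
qed

lemma measurable_mem_Qbox [measurable]:
  "Measurable.pred (lborel \<Otimes>\<^sub>M lborel) (\<lambda>(x, u::real^'n). u \<in> Qbox x)"
proof -
  have [measurable]:
    "(\<lambda>p::(real^'n) \<times> (real^'n). fst p $ i) \<in> borel_measurable (lborel \<Otimes>\<^sub>M lborel)"
    "(\<lambda>p::(real^'n) \<times> (real^'n). snd p $ i) \<in> borel_measurable (lborel \<Otimes>\<^sub>M lborel)" for i
    by (rule measurable_compose[OF measurable_fst], measurable)
      (rule measurable_compose[OF measurable_snd], measurable)
  show ?thesis
    unfolding mem_Qbox case_prod_beta by measurable
qed

lemma nn_integral_Qbox_swap_lborel:
  fixes f c :: "real^'n \<Rightarrow> ennreal"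
  assumes [measurable]: "f \<in> borel_measurable lborel" "c \<in> borel_measurable lborel"
  shows "(\<integral>\<^sup>+x\<in>pos_orthant. c x * (\<integral>\<^sup>+u\<in>Qbox x. f u \<partial>lborel) \<partial>lborel)
       = (\<integral>\<^sup>+u\<in>pos_orthant. f u * (\<integral>\<^sup>+x\<in>cbox u (2 *\<^sub>R u). c x \<partial>lborel) \<partial>lborel)"
proof -
  define K where "K x u = c x * f u * indicator pos_orthant x * indicator (Qbox x) u" for x u
  have K_meas: "case_prod K \<in> borel_measurable (lborel \<Otimes>\<^sub>M lborel)"
    unfolding K_def by measurable
  have "(\<integral>\<^sup>+x\<in>pos_orthant. c x * (\<integral>\<^sup>+u\<in>Qbox x. f u \<partial>lborel) \<partial>lborel)
      = (\<integral>\<^sup>+x. (\<integral>\<^sup>+u. K x u \<partial>lborel) \<partial>lborel)"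
    by (intro nn_integral_cong)
      (simp add: K_def nn_integral_cmult[symmetric] nn_integral_multc[symmetric] ac_simps)
  also have "\<dots> = (\<integral>\<^sup>+u. (\<integral>\<^sup>+x. K x u \<partial>lborel) \<partial>lborel)"
    by (rule lborel_pair.Fubini'[OF K_meas, symmetric])
  also have "\<dots> = (\<integral>\<^sup>+u\<in>pos_orthant. f u * (\<integral>\<^sup>+x\<in>cbox u (2 *\<^sub>R u). c x \<partial>lborel) \<partial>lborel)"
  proof (intro nn_integral_cong)
    fix u :: "real^'n"
    have "K x u = f u * indicator pos_orthant u * (c x * indicator (cbox u (2 *\<^sub>R u)) x)" for x
      using pos_orthant_Qbox_iff[of x u] by (auto simp: K_def indicator_def mult_ac)
    then have "(\<integral>\<^sup>+x. K x u \<partial>lborel)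
        = (\<integral>\<^sup>+x. f u * indicator pos_orthant u
              * (c x * indicator (cbox u (2 *\<^sub>R u)) x) \<partial>lborel)"
      by simp
    also have "\<dots> = f u * indicator pos_orthant u * (\<integral>\<^sup>+x\<in>cbox u (2 *\<^sub>R u). c x \<partial>lborel)"
      by (rule nn_integral_cmult) measurable
    finally show "(\<integral>\<^sup>+x. K x u \<partial>lborel)
        = f u * (\<integral>\<^sup>+x\<in>cbox u (2 *\<^sub>R u). c x \<partial>lborel) * indicator pos_orthant u"
      by (simp only: ac_simps)
  qed
  finally show ?thesis .
qed

lemma nn_integral_Qbox_swap:
  fixes f c :: "real^'n \<Rightarrow> ennreal"
  assumes f: "(\<lambda>u. f u * indicator pos_orthant u) \<in> borel_measurable lebesgue"
    and c: "c \<in> borel_measurable lborel"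
  shows "(\<integral>\<^sup>+x\<in>pos_orthant. c x * (\<integral>\<^sup>+u\<in>Qbox x. f u \<partial>lebesgue) \<partial>lebesgue)
       = (\<integral>\<^sup>+u\<in>pos_orthant. f u * (\<integral>\<^sup>+x\<in>cbox u (2 *\<^sub>R u). c x \<partial>lebesgue) \<partial>lebesgue)"
proof -
  \<comment> \<open>Tonelli needs Borel measurability on the product, so pass to a Borel version of f.\<close>
  obtain g where g: "g \<in> borel_measurable lborel"
    and fg: "AE u in lborel. f u * indicator pos_orthant u = g u"
    using completion_ex_borel_measurable[OF f] by blast
  have inner: "(\<integral>\<^sup>+u\<in>Qbox x. f u \<partial>lborel) = (\<integral>\<^sup>+u\<in>Qbox x. g u \<partial>lborel)"
    if "x \<in> pos_orthant" for x
  proof -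
    have "(\<integral>\<^sup>+u\<in>Qbox x. f u \<partial>lborel)
        = (\<integral>\<^sup>+u\<in>Qbox x. f u * indicator pos_orthant u \<partial>lborel)"
      using Qbox_subset_pos_orthant[OF that]
      by (intro nn_integral_cong) (auto simp: indicator_def)
    also have "\<dots> = (\<integral>\<^sup>+u\<in>Qbox x. g u \<partial>lborel)"
      by (rule nn_integral_cong_AE) (use fg in auto)
    finally show ?thesis .
  qed
  have "(\<integral>\<^sup>+x\<in>pos_orthant. c x * (\<integral>\<^sup>+u\<in>Qbox x. f u \<partial>lebesgue) \<partial>lebesgue)
      = (\<integral>\<^sup>+x\<in>pos_orthant. c x * (\<integral>\<^sup>+u\<in>Qbox x. g u \<partial>lborel) \<partial>lborel)"
    unfolding nn_integral_completion
    by (intro nn_integral_cong) (simp add: inner split: split_indicator)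
  also have "\<dots> = (\<integral>\<^sup>+u\<in>pos_orthant. g u * (\<integral>\<^sup>+x\<in>cbox u (2 *\<^sub>R u). c x \<partial>lborel) \<partial>lborel)"
    by (rule nn_integral_Qbox_swap_lborel[OF g c])
  also have "\<dots> = (\<integral>\<^sup>+u\<in>pos_orthant. f u * (\<integral>\<^sup>+x\<in>cbox u (2 *\<^sub>R u). c x \<partial>lborel) \<partial>lborel)"
    by (rule nn_integral_cong_AE) (use fg in \<open>auto simp: indicator_def\<close>)
  finally show ?thesis
    by (simp only: nn_integral_completion)
qed

lemma nn_integral_piprod_weight_le:
  fixes f :: "real^'n \<Rightarrow> ennreal"
  assumes f: "(\<lambda>u. f u * indicator pos_orthant u) \<in> borel_measurable lebesgue"
  shows "(\<integral>\<^sup>+u\<in>pos_orthant. f u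
            * (\<integral>\<^sup>+x\<in>cbox u (2 *\<^sub>R u). ennreal (2 ^ CARD('n) * piprod x powr (\<alpha> - 1)) \<partial>lebesgue)
          \<partial>lebesgue)
       \<le> ennreal (2 powr (max 1 \<alpha> * real CARD('n)))
         * (\<integral>\<^sup>+u\<in>pos_orthant. f u * ennreal (piprod u powr \<alpha>) \<partial>lebesgue)"
proof -
  define C where "C = (2::real) powr (max 1 \<alpha> * real CARD('n))"
  define W where
    "W u = (\<integral>\<^sup>+x\<in>cbox u (2 *\<^sub>R u). ennreal (2 ^ CARD('n) * piprod x powr (\<alpha> - 1)) \<partial>lebesgue)"
    for u :: "real^'n"
  have [measurable]: "piprod \<in> borel_measurable lebesgue"
    using measurable_completion[OF piprod_measurable] .
  have "(\<integral>\<^sup>+u\<in>pos_orthant. f u * W u \<partial>lebesgue)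
      \<le> (\<integral>\<^sup>+u. ennreal C * (f u * indicator pos_orthant u * ennreal (piprod u powr \<alpha>)) \<partial>lebesgue)"
  proof (intro nn_integral_mono)
    fix u :: "real^'n"
    show "f u * W u * indicator pos_orthant u
        \<le> ennreal C * (f u * indicator pos_orthant u * ennreal (piprod u powr \<alpha>))"
    proof (cases "u \<in> pos_orthant")
      case True
      have "W u \<le> ennreal C * ennreal (piprod u powr \<alpha>)"
        using nn_integral_cbox_double_piprod_powr_le[OF True, of \<alpha>]
        by (simp add: W_def C_def ennreal_mult')
      from mult_left_mono[OF this, of "f u"] show ?thesis
        using True by (simp add: ac_simps)
    qed simp
  qed
  also have "\<dots> = ennreal C
      * (\<integral>\<^sup>+u. f u * indicator pos_orthant u * ennreal (piprod u powr \<alpha>) \<partial>lebesgue)"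
    by (rule nn_integral_cmult) (use f in measurable)
  also have "\<dots> = ennreal C * (\<integral>\<^sup>+u\<in>pos_orthant. f u * ennreal (piprod u powr \<alpha>) \<partial>lebesgue)"
    by (simp add: ac_simps)
  finally show ?thesis
    unfolding C_def W_def .
qed

theorem lemma5p1:
  fixes \<phi> :: "real^'n \<Rightarrow> real" and r \<alpha> :: real
  assumes "loc_integrable_pos \<phi>"
    and "\<forall>x\<in>pos_orthant. 0 \<le> \<phi> x"
    and "1 \<le> r"
  shows "(\<integral>\<^sup>+ x\<in>pos_orthant. ennreal ((Tavg \<phi> x) powr r * piprod x powr \<alpha>) \<partial>lebesgue)
       \<le> ennreal (2 powr (max 1 \<alpha> * real CARD('n)))
         * (\<integral>\<^sup>+ x\<in>pos_orthant. ennreal ((\<phi> x) powr r * piprod x powr \<alpha>) \<partial>lebesgue)"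
proof -
  define w where "w x = ennreal (2 ^ CARD('n) * piprod x powr (\<alpha> - 1))" for x :: "real^'n"
  have "(\<lambda>u. ennreal ((\<phi> u * indicator pos_orthant u) powr r)) \<in> borel_measurable lebesgue"
    using loc_integrable_pos_measurable[OF assms(1)] by measurable
  then have meas:
    "(\<lambda>u. ennreal (\<phi> u powr r) * indicator pos_orthant u) \<in> borel_measurable lebesgue"
    by (rule measurable_cong[THEN iffD1, rotated]) (simp add: indicator_def)
  have "(\<integral>\<^sup>+ x\<in>pos_orthant. ennreal ((Tavg \<phi> x) powr r * piprod x powr \<alpha>) \<partial>lebesgue)
      \<le> (\<integral>\<^sup>+x\<in>pos_orthant. w x * (\<integral>\<^sup>+u\<in>Qbox x. ennreal (\<phi> u powr r) \<partial>lebesgue) \<partial>lebesgue)"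
    using Tavg_powr_le_Qbox_integral[OF assms]
    by (intro nn_integral_mono) (simp add: w_def indicator_def)
  also have "\<dots> = (\<integral>\<^sup>+u\<in>pos_orthant. ennreal (\<phi> u powr r)
      * (\<integral>\<^sup>+x\<in>cbox u (2 *\<^sub>R u). w x \<partial>lebesgue) \<partial>lebesgue)"
    by (rule nn_integral_Qbox_swap[OF meas]) (simp add: w_def[abs_def])
  also have "\<dots> \<le> ennreal (2 powr (max 1 \<alpha> * real CARD('n)))
      * (\<integral>\<^sup>+u\<in>pos_orthant. ennreal (\<phi> u powr r) * ennreal (piprod u powr \<alpha>) \<partial>lebesgue)"
    unfolding w_def by (rule nn_integral_piprod_weight_le[OF meas])
  also have "\<dots> = ennreal (2 powr (max 1 \<alpha> * real CARD('n)))
      * (\<integral>\<^sup>+ x\<in>pos_orthant. ennreal ((\<phi> x) powr r * piprod x powr \<alpha>) \<partial>lebesgue)"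
    by (simp add: ennreal_mult)
  finally show ?thesis .
qed

end
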